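(* Let $E$ be a field and $F$ a field extension of $E$. Let $X=(x_1,\dots,x_n)$ and let $$\sigma=\sum_{I\in\mathbb N^n}\alpha_IX^I\in F[[X]],\qquad \alpha_I\in F,$$ where $X^I=x_1^{i_1}\cdots x_n^{i_n}$ for $I=(i_1,\dots,i_n)$. For $1\le l\le n$ and $I\in\mathbb N^n$ define the one-variable series $$a_{I,l}=\sum_{j=0}^\infty \alpha_{J}x_l^j\in F[[x_l]],\qquad J=(i_1,\dots,i_{l-1},j,i_{l+1},\dots,i_n).$$ If $\sigma$ is algebraic over $E((X))$ (the fraction field of $E[[X]]$, viewed inside the fraction field of $F[[X]]$), then $a_{I,l}$ is algebraic over $E((x_l))$ for every $1\le l\le n$ and every $I\in\mathbb N^n$. *)

theory Defs
  imports "HOL-Computational_Algebra.Computational_Algebra"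
begin

text \<open>A subset E of a field (of type 'a) that is itself a subfield; the ambient
  type 'a plays the role of the extension field F.\<close>
definition is_subfield :: "'a::field set \<Rightarrow> bool" where
  "is_subfield E \<longleftrightarrow> 0 \<in> E \<and> 1 \<in> E \<and>
     (\<forall>x\<in>E. \<forall>y\<in>E. x + y \<in> E \<and> x * y \<in> E) \<and>
     (\<forall>x\<in>E. - x \<in> E \<and> inverse x \<in> E)"

text \<open>Multivariate formal power series in the n variables x_0,...,x_{n-1}:
  maps from exponent vectors to coefficients; only exponent vectors in
  exps n (support in {..<n}) are relevant.\<close>
definition exps :: "nat \<Rightarrow> (nat \<Rightarrow> nat) set" where
  "exps n = {I. \<forall>i\<ge>n. I i = 0}"

definition mps_mult ::
  "((nat \<Rightarrow> nat) \<Rightarrow> 'a::comm_ring_1) \<Rightarrow> ((nat \<Rightarrow> nat) \<Rightarrow> 'a) \<Rightarrow> (nat \<Rightarrow> nat) \<Rightarrow> 'a" where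
  "mps_mult f g = (\<lambda>I. \<Sum>J\<in>{J. \<forall>i. J i \<le> I i}. f J * g (\<lambda>i. I i - J i))"

fun mps_pow :: "((nat \<Rightarrow> nat) \<Rightarrow> 'a::comm_ring_1) \<Rightarrow> nat \<Rightarrow> (nat \<Rightarrow> nat) \<Rightarrow> 'a" where
  "mps_pow f 0 = (\<lambda>I. if I = (\<lambda>_. 0) then 1 else 0)"
| "mps_pow f (Suc k) = mps_mult f (mps_pow f k)"

text \<open>sigma in F[[x_0..x_{n-1}]] is algebraic over E((X)) = Frac(E[[X]]):
  there is a nonzero polynomial with coefficients in E((X)) annihilating sigma.
  After clearing denominators (F[[X]] is a domain) this is: there are
  c_0,...,c_d in E[[X]], not all zero, with sum_k c_k sigma^k = 0 in F[[X]].\<close>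
definition mps_algebraic_over :: "'a::field set \<Rightarrow> nat \<Rightarrow> ((nat \<Rightarrow> nat) \<Rightarrow> 'a) \<Rightarrow> bool" where
  "mps_algebraic_over E n \<sigma> \<longleftrightarrow>
     (\<exists>(c :: nat \<Rightarrow> (nat \<Rightarrow> nat) \<Rightarrow> 'a) (d :: nat).
        (\<forall>k\<le>d. \<forall>I\<in>exps n. c k I \<in> E) \<and>
        (\<exists>k\<le>d. \<exists>I\<in>exps n. c k I \<noteq> 0) \<and>
        (\<forall>I\<in>exps n. (\<Sum>k\<le>d. mps_mult (c k) (mps_pow \<sigma> k) I) = 0))"

definition fps_algebraic_over :: "'a::field set \<Rightarrow> 'a fps \<Rightarrow> bool" where
  "fps_algebraic_over E a \<longleftrightarrow>
     (\<exists>p :: 'a fls poly. p \<noteq> 0 \<and> (\<forall>k m. fls_nth (coeff p k) m \<in> E) \<and>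
        poly p (fps_to_fls a) = 0)"

end

theory Submission
  imports Defs
begin

text \<open>Regard \<open>\<sigma>\<close> as a power series in the variables \<open>x\<^sub>i\<close>, \<open>i \<noteq> l\<close>, whose coefficients
  are Laurent series in \<open>x\<^sub>l\<close>. Then \<open>a_{I,l}\<close> is one of these coefficients, and the
  relation for \<open>\<sigma>\<close> becomes a nonzero polynomial equation \<open>P(\<sigma>) = 0\<close> whose coefficients are
  series with coefficients in \<open>E[[x\<^sub>l]]\<close>. The elements of \<open>F((x\<^sub>l))\<close> integral over
  \<open>E((x\<^sub>l))\<close> form a subring \<open>R\<close> containing every root of a nonzero polynomial over \<open>R\<close>.
  All coefficients of a root of \<open>P\<close> lie in \<open>R\<close>, by well-founded induction along the reverse
  lexicographic order of exponents: after translating \<open>P\<close> by the part of the root below an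
  exponent \<open>M\<close>, the coefficient at \<open>M\<close> becomes the lowest coefficient of a root, and comparing
  lowest terms exhibits it as a root of a nonzero polynomial over \<open>R\<close>.\<close>

section \<open>Subrings, spans and integrality\<close>

definition is_subring :: "'a::comm_ring_1 set \<Rightarrow> bool" where
  "is_subring K \<longleftrightarrow> 0 \<in> K \<and> 1 \<in> K \<and> (\<forall>x\<in>K. \<forall>y\<in>K. x + y \<in> K \<and> x * y \<in> K) \<and> (\<forall>x\<in>K. - x \<in> K)"

lemma subring_zero: "is_subring K \<Longrightarrow> 0 \<in> K"
  and subring_one: "is_subring K \<Longrightarrow> 1 \<in> K"
  and subring_add: "is_subring K \<Longrightarrow> x \<in> K \<Longrightarrow> y \<in> K \<Longrightarrow> x + y \<in> K"
  and subring_mult: "is_subring K \<Longrightarrow> x \<in> K \<Longrightarrow> y \<in> K \<Longrightarrow> x * y \<in> K"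
  and subring_uminus: "is_subring K \<Longrightarrow> x \<in> K \<Longrightarrow> - x \<in> K"
  by (auto simp: is_subring_def)

lemma subring_sum: "is_subring K \<Longrightarrow> (\<And>a. a \<in> A \<Longrightarrow> f a \<in> K) \<Longrightarrow> sum f A \<in> K"
  by (induction A rule: infinite_finite_induct) (auto simp: subring_zero subring_add)

lemma subring_prod: "is_subring K \<Longrightarrow> (\<And>a. a \<in> A \<Longrightarrow> f a \<in> K) \<Longrightarrow> prod f A \<in> K"
  by (induction A rule: infinite_finite_induct) (auto simp: subring_one subring_mult)

lemma subfield_imp_subring: "is_subfield K \<Longrightarrow> is_subring K"
  unfolding is_subfield_def is_subring_def by blast

lemma subfield_inverse: "is_subfield K \<Longrightarrow> x \<in> K \<Longrightarrow> inverse x \<in> K"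
  unfolding is_subfield_def by blast

lemma coeffs_pcompose_in:
  assumes K: "is_subring K" and "\<forall>i. coeff p i \<in> K" and q: "\<forall>i. coeff q i \<in> K"
  shows "\<forall>i. coeff (pcompose p q) i \<in> K"
  using assms(2)
proof (induction p)
  case 0
  then show ?case by (simp add: subring_zero[OF K])
next
  case (pCons a p)
  have "a \<in> K" "\<forall>i. coeff p i \<in> K"
    using pCons.prems by (metis coeff_pCons_0, metis coeff_pCons_Suc)
  moreover have "coeff [:a:] i \<in> K" for i
    using \<open>a \<in> K\<close> K by (simp add: coeff_pCons subring_zero split: nat.split)
  ultimately show ?case
    using pCons.IH q K unfolding pcompose_pCons
    by (simp only: coeff_add coeff_mult) (blast intro: subring_add subring_sum subring_mult)
qed

definition algebraic_over :: "'a::comm_ring_1 set \<Rightarrow> 'a \<Rightarrow> bool" where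
  "algebraic_over K z \<longleftrightarrow> (\<exists>p. p \<noteq> 0 \<and> (\<forall>i. coeff p i \<in> K) \<and> poly p z = 0)"

definition root_closed :: "'a::comm_ring_1 set \<Rightarrow> bool" where
  "root_closed R \<longleftrightarrow> (\<forall>z. algebraic_over R z \<longrightarrow> z \<in> R)"

lemma algebraic_over_sumI:
  assumes R: "is_subring R" and A: "finite A" "\<forall>i\<in>A. c i \<in> R" "\<exists>i\<in>A. c i \<noteq> 0"
    and root: "(\<Sum>i\<in>A. c i * t ^ i) = 0"
  shows "algebraic_over R t"
proof -
  define p where "p = (\<Sum>i\<in>A. monom (c i) i)"
  have coeff_p: "coeff p k = (if k \<in> A then c k else 0)" for k
    unfolding p_def using A(1) by (simp add: coeff_sum sum.delta')
  have "\<forall>k. coeff p k \<in> R" using A(2) R by (simp add: coeff_p subring_zero)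
  moreover have "p \<noteq> 0" using A(3) coeff_p by (metis coeff_0)
  moreover have "poly p t = 0" using root unfolding p_def by (simp add: poly_sum poly_monom)
  ultimately show ?thesis unfolding algebraic_over_def by blast
qed

definition span_over :: "'a::comm_ring_1 set \<Rightarrow> 'a set \<Rightarrow> 'a set" where
  "span_over K S = {x. \<exists>f. (\<forall>s\<in>S. f s \<in> K) \<and> x = (\<Sum>s\<in>S. f s * s)}"

lemma span_overI: "(\<forall>s\<in>S. f s \<in> K) \<Longrightarrow> (\<Sum>s\<in>S. f s * s) \<in> span_over K S"
  unfolding span_over_def by blast

lemma span_overE:
  assumes "x \<in> span_over K S"
  obtains f where "\<forall>s\<in>S. f s \<in> K" "x = (\<Sum>s\<in>S. f s * s)"
  using assms unfolding span_over_def by blast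

lemma span_over_empty: "span_over K {} = {0}"
  unfolding span_over_def by auto

lemma span_over_zero: "is_subring K \<Longrightarrow> 0 \<in> span_over K S"
  using span_overI[of S "\<lambda>_. 0" K] by (simp add: subring_zero)

lemma span_over_base:
  assumes "is_subring K" "finite S" "s \<in> S"
  shows "s \<in> span_over K S"
proof -
  have "(\<Sum>t\<in>S. (if t = s then 1 else 0) * t) \<in> span_over K S"
    using assms(1) by (intro span_overI) (simp add: subring_zero subring_one)
  moreover have "(\<Sum>t\<in>S. (if t = s then 1 else 0) * t) = (\<Sum>t\<in>S. if t = s then t else 0)"
    by (intro sum.cong) auto
  ultimately show ?thesis using assms(2,3) by simp
qed

lemma span_over_add:
  assumes K: "is_subring K" and "x \<in> span_over K S" "y \<in> span_over K S"
  shows "x + y \<in> span_over K S"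
proof -
  obtain f where f: "\<forall>s\<in>S. f s \<in> K" "x = (\<Sum>s\<in>S. f s * s)"
    using assms(2) by (rule span_overE)
  obtain g where g: "\<forall>s\<in>S. g s \<in> K" "y = (\<Sum>s\<in>S. g s * s)"
    using assms(3) by (rule span_overE)
  have "x + y = (\<Sum>s\<in>S. (f s + g s) * s)"
    unfolding f(2) g(2) by (simp add: distrib_right sum.distrib)
  moreover have "\<forall>s\<in>S. f s + g s \<in> K" using f(1) g(1) K by (simp add: subring_add)
  ultimately show ?thesis by (simp only: span_overI)
qed

lemma span_over_scale:
  assumes K: "is_subring K" and "a \<in> K" "x \<in> span_over K S"
  shows "a * x \<in> span_over K S"
proof -
  obtain f where f: "\<forall>s\<in>S. f s \<in> K" "x = (\<Sum>s\<in>S. f s * s)"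
    using assms(3) by (rule span_overE)
  have "a * x = (\<Sum>s\<in>S. (a * f s) * s)"
    unfolding f(2) by (simp add: sum_distrib_left mult.assoc)
  moreover have "\<forall>s\<in>S. a * f s \<in> K" using f(1) K \<open>a \<in> K\<close> by (simp add: subring_mult)
  ultimately show ?thesis by (simp only: span_overI)
qed

lemma span_over_diff:
  assumes K: "is_subring K" and "x \<in> span_over K S" "y \<in> span_over K S"
  shows "x - y \<in> span_over K S"
proof -
  have "(- 1) * y \<in> span_over K S"
    by (rule span_over_scale[OF K _ assms(3)]) (simp add: K subring_one subring_uminus)
  then show ?thesis using span_over_add[OF K assms(2), of "(- 1) * y"] by simp
qed

lemma span_over_sum:
  "is_subring K \<Longrightarrow> (\<And>a. a \<in> A \<Longrightarrow> f a \<in> span_over K S) \<Longrightarrow> sum f A \<in> span_over K S"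
  by (induction A rule: infinite_finite_induct) (auto simp: span_over_zero span_over_add)

lemma span_over_insert:
  assumes "x \<in> span_over K (insert s S)" "finite S" "s \<notin> S"
  shows "\<exists>a\<in>K. \<exists>w\<in>span_over K S. x = a * s + w"
proof -
  obtain f where f: "\<forall>t\<in>insert s S. f t \<in> K" "x = (\<Sum>t\<in>insert s S. f t * t)"
    using assms(1) by (rule span_overE)
  have "x = f s * s + (\<Sum>t\<in>S. f t * t)" using f(2) assms(2,3) by simp
  moreover have "(\<Sum>t\<in>S. f t * t) \<in> span_over K S" using f(1) by (simp add: span_overI)
  ultimately show ?thesis using f(1) by blast
qed

lemma nontrivial_relation_of_eliminated:
  fixes v :: "'i \<Rightarrow> 'a::idom"
  assumes K: "is_subring K" and I: "finite I" "j \<notin> I" and aj: "a j \<in> K" "a j \<noteq> 0"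
    and a: "\<forall>i\<in>I. a i \<in> K"
    and g: "\<forall>i\<in>I. g i \<in> K" "\<exists>i\<in>I. g i \<noteq> 0" "(\<Sum>i\<in>I. g i * (a j * v i - a i * v j)) = 0"
  shows "\<exists>h. (\<forall>i\<in>insert j I. h i \<in> K) \<and> (\<exists>i\<in>insert j I. h i \<noteq> 0) \<and> (\<Sum>i\<in>insert j I. h i * v i) = 0"
proof -
  define h where "h i = (if i = j then - (\<Sum>i\<in>I. g i * a i) else g i * a j)" for i
  have "(\<Sum>i\<in>I. h i * v i) = (\<Sum>i\<in>I. g i * a j * v i)"
    using I(2) by (intro sum.cong) (auto simp: h_def)
  then have "(\<Sum>i\<in>insert j I. h i * v i) = h j * v j + (\<Sum>i\<in>I. g i * a j * v i)"
    using I by simp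
  also have "(\<Sum>i\<in>I. g i * a j * v i) = (\<Sum>i\<in>I. g i * a i) * v j"
    using g(3) by (simp add: right_diff_distrib sum_subtractf sum_distrib_right mult.assoc)
  finally have "(\<Sum>i\<in>insert j I. h i * v i) = 0" by (simp add: h_def)
  moreover have "\<forall>i\<in>insert j I. h i \<in> K"
    using g(1) a aj(1) K by (auto simp: h_def intro!: subring_uminus subring_sum subring_mult)
  moreover have "\<exists>i\<in>insert j I. h i \<noteq> 0"
    using g(2) aj(2) I(2) by (force simp: h_def)
  ultimately show ?thesis by blast
qed

lemma span_over_dependent:
  fixes v :: "'i \<Rightarrow> 'a::idom"
  assumes K: "is_subring K" and S: "finite S" and I: "finite I" "card S < card I"
    and v: "\<forall>i\<in>I. v i \<in> span_over K S"
  shows "\<exists>g. (\<forall>i\<in>I. g i \<in> K) \<and> (\<exists>i\<in>I. g i \<noteq> 0) \<and> (\<Sum>i\<in>I. g i * v i) = 0"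
  using S I v
proof (induction S arbitrary: I v rule: finite_induct)
  case empty
  then obtain i0 where i0: "i0 \<in> I" by fastforce
  have "\<forall>i\<in>I. v i = 0" using empty(3) by (simp add: span_over_empty)
  then show ?case
    using i0 K by (intro exI[of _ "\<lambda>i. if i = i0 then 1 else 0"]) (auto simp: subring_zero subring_one)
next
  case (insert s S)
  have "\<forall>i\<in>I. \<exists>a\<in>K. \<exists>w\<in>span_over K S. v i = a * s + w"
    using insert.prems(3) span_over_insert[OF _ insert(1,2)] by blast
  then obtain a w where aw: "\<forall>i\<in>I. a i \<in> K \<and> w i \<in> span_over K S \<and> v i = a i * s + w i"
    by metis
  show ?case
  proof (cases "\<forall>i\<in>I. a i = 0")
    case True
    then show ?thesis using aw insert by (intro insert.IH) auto
  next
    case False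
    then obtain j where j: "j \<in> I" "a j \<noteq> 0" by blast
    have "\<forall>i\<in>I - {j}. a j * v i - a i * v j \<in> span_over K S"
    proof
      fix i assume "i \<in> I - {j}"
      then have "a j * v i - a i * v j = a j * w i - a i * w j"
        using aw j(1) by (simp add: algebra_simps)
      then show "a j * v i - a i * v j \<in> span_over K S"
        using aw \<open>i \<in> I - {j}\<close> j(1) K by (simp add: span_over_diff span_over_scale)
    qed
    moreover have "card S < card (I - {j})"
      using insert(1,2) insert.prems(1,2) j(1) by (simp add: card_Diff_singleton)
    ultimately obtain g where "\<forall>i\<in>I - {j}. g i \<in> K" "\<exists>i\<in>I - {j}. g i \<noteq> 0"
        "(\<Sum>i\<in>I - {j}. g i * (a j * v i - a i * v j)) = 0"
      using insert.IH[of "I - {j}" "\<lambda>i. a j * v i - a i * v j"] insert.prems(1) by auto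
    then have "\<exists>h. (\<forall>i\<in>insert j (I - {j}). h i \<in> K) \<and> (\<exists>i\<in>insert j (I - {j}). h i \<noteq> 0)
        \<and> (\<Sum>i\<in>insert j (I - {j}). h i * v i) = 0"
      using aw j insert.prems(1) by (intro nontrivial_relation_of_eliminated[OF K]) auto
    then show ?thesis by (simp only: insert_Diff[OF j(1)])
  qed
qed

definition stabilizes :: "'a::comm_ring_1 set \<Rightarrow> 'a set \<Rightarrow> 'a \<Rightarrow> bool" where
  "stabilizes K S z \<longleftrightarrow> (\<forall>x\<in>span_over K S. z * x \<in> span_over K S)"

text \<open>Integrality in module form: \<open>z\<close> stabilizes a finitely generated \<open>K\<close>-submodule
  that contains \<open>1\<close>.\<close>
definition integral_over :: "'a::comm_ring_1 set \<Rightarrow> 'a \<Rightarrow> bool" where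
  "integral_over K z \<longleftrightarrow> (\<exists>S. finite S \<and> 1 \<in> span_over K S \<and> stabilizes K S z)"

definition products :: "'a::comm_ring_1 set \<Rightarrow> 'a set \<Rightarrow> 'a set" where
  "products S T = (\<lambda>(s, t). s * t) ` (S \<times> T)"

lemma finite_products: "finite S \<Longrightarrow> finite T \<Longrightarrow> finite (products S T)"
  unfolding products_def by simp

lemma stabilizesI:
  assumes K: "is_subring K" and "\<forall>s\<in>S. z * s \<in> span_over K S"
  shows "stabilizes K S z"
  unfolding stabilizes_def
proof
  fix x assume "x \<in> span_over K S"
  then obtain f where f: "\<forall>s\<in>S. f s \<in> K" "x = (\<Sum>s\<in>S. f s * s)" by (rule span_overE)
  have "z * x = (\<Sum>s\<in>S. f s * (z * s))" using f(2) by (simp add: sum_distrib_left algebra_simps)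
  also have "\<dots> \<in> span_over K S"
  proof (rule span_over_sum[OF K], rule span_over_scale[OF K])
    fix s assume "s \<in> S"
    then show "f s \<in> K" "z * s \<in> span_over K S" using assms(2) f(1) by auto
  qed
  finally show "z * x \<in> span_over K S" .
qed

lemma stabilizesD: "stabilizes K S z \<Longrightarrow> x \<in> span_over K S \<Longrightarrow> z * x \<in> span_over K S"
  unfolding stabilizes_def by blast

lemma stabilizes_scalar: "is_subring K \<Longrightarrow> a \<in> K \<Longrightarrow> stabilizes K S a"
  unfolding stabilizes_def by (auto intro: span_over_scale)

lemma stabilizes_add: "is_subring K \<Longrightarrow> stabilizes K S z \<Longrightarrow> stabilizes K S w \<Longrightarrow> stabilizes K S (z + w)"
  unfolding stabilizes_def by (auto simp: distrib_right intro: span_over_add)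

lemma stabilizes_mult: "stabilizes K S z \<Longrightarrow> stabilizes K S w \<Longrightarrow> stabilizes K S (z * w)"
  unfolding stabilizes_def by (simp add: mult.assoc)

lemma stabilizes_uminus: "is_subring K \<Longrightarrow> stabilizes K S z \<Longrightarrow> stabilizes K S (- z)"
  using stabilizes_mult[OF stabilizes_scalar[of K "- 1"]] by (simp add: subring_one subring_uminus)

lemma stabilizes_poly:
  assumes K: "is_subring K" and "stabilizes K S z" "\<forall>i. coeff p i \<in> K"
  shows "stabilizes K S (poly p z)"
  using assms(3)
proof (induction p)
  case 0
  then show ?case by (simp add: stabilizes_scalar[OF K] subring_zero[OF K])
next
  case (pCons a p)
  have "a \<in> K" "\<forall>i. coeff p i \<in> K"
    using pCons.prems by (metis coeff_pCons_0, metis coeff_pCons_Suc)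
  with pCons.IH assms(2) K show ?case
    by (simp add: stabilizes_add stabilizes_scalar stabilizes_mult)
qed

lemma power_in_stabilized_span:
  "stabilizes K S z \<Longrightarrow> 1 \<in> span_over K S \<Longrightarrow> z ^ i \<in> span_over K S"
  by (induction i) (simp_all add: stabilizesD)

lemma span_over_mult:
  assumes K: "is_subring K" and ST: "finite S" "finite T"
    and "x \<in> span_over K S" "y \<in> span_over K T"
  shows "x * y \<in> span_over K (products S T)"
proof -
  obtain f where f: "\<forall>s\<in>S. f s \<in> K" "x = (\<Sum>s\<in>S. f s * s)" using assms(4) by (rule span_overE)
  obtain g where g: "\<forall>t\<in>T. g t \<in> K" "y = (\<Sum>t\<in>T. g t * t)" using assms(5) by (rule span_overE)
  have "x * y = (\<Sum>s\<in>S. \<Sum>t\<in>T. (f s * g t) * (s * t))"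
    by (simp add: f(2) g(2) sum_product algebra_simps)
  also have "\<dots> \<in> span_over K (products S T)"
  proof (rule span_over_sum[OF K], rule span_over_sum[OF K], rule span_over_scale[OF K])
    fix s t assume "s \<in> S" "t \<in> T"
    then show "f s * g t \<in> K" using f(1) g(1) K by (simp add: subring_mult)
    show "s * t \<in> span_over K (products S T)"
      using finite_products[OF ST] \<open>s \<in> S\<close> \<open>t \<in> T\<close>
      by (intro span_over_base[OF K]) (auto simp: products_def)
  qed
  finally show ?thesis .
qed

lemma stabilizes_products:
  assumes K: "is_subring K" and ST: "finite S" "finite T"
    and z: "stabilizes K S z \<or> stabilizes K T z"
  shows "stabilizes K (products S T) z"
proof (rule stabilizesI[OF K], intro ballI)
  fix u assume "u \<in> products S T"
  then obtain s t where st: "s \<in> S" "t \<in> T" "u = s * t" unfolding products_def by auto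
  have s: "s \<in> span_over K S" and t: "t \<in> span_over K T"
    using st(1,2) ST by (auto intro: span_over_base[OF K])
  from z have "(z * s) * t \<in> span_over K (products S T) \<or> s * (z * t) \<in> span_over K (products S T)"
    using s t by (auto intro: span_over_mult[OF K ST] stabilizesD)
  then show "z * u \<in> span_over K (products S T)" using st(3) by (auto simp: algebra_simps)
qed

lemma integral_over_common_span:
  assumes K: "is_subring K" and "finite U" "\<forall>u\<in>U. integral_over K u"
  shows "\<exists>S. finite S \<and> 1 \<in> span_over K S \<and> (\<forall>u\<in>U. stabilizes K S u)"
  using assms(2,3)
proof (induction U rule: finite_induct)
  case empty
  then show ?case by (intro exI[of _ "{1}"]) (auto intro: span_over_base[OF K])
next
  case (insert x U)
  then obtain S where S: "finite S" "1 \<in> span_over K S" "\<forall>u\<in>U. stabilizes K S u" by auto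
  obtain T where T: "finite T" "1 \<in> span_over K T" "stabilizes K T x"
    using insert.prems unfolding integral_over_def by auto
  have "1 * 1 \<in> span_over K (products S T)" using S T by (intro span_over_mult[OF K])
  then show ?case
    using S T by (intro exI[of _ "products S T"]) (auto intro: finite_products stabilizes_products[OF K])
qed

lemma integral_over_const: "is_subring K \<Longrightarrow> a \<in> K \<Longrightarrow> integral_over K a"
  unfolding integral_over_def by (intro exI[of _ "{1}"]) (auto intro: stabilizes_scalar span_over_base)

lemma integral_over_add:
  assumes K: "is_subring K" and "integral_over K z" "integral_over K w"
  shows "integral_over K (z + w)"
  using integral_over_common_span[OF K, of "{z, w}"] assms
  unfolding integral_over_def by (auto intro: stabilizes_add[OF K])

lemma integral_over_mult:
  assumes K: "is_subring K" and "integral_over K z" "integral_over K w"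
  shows "integral_over K (z * w)"
  using integral_over_common_span[OF K, of "{z, w}"] assms
  unfolding integral_over_def by (auto intro: stabilizes_mult)

lemma integral_over_uminus: "is_subring K \<Longrightarrow> integral_over K z \<Longrightarrow> integral_over K (- z)"
  unfolding integral_over_def by (auto intro: stabilizes_uminus)

lemma subring_integral_over: "is_subring K \<Longrightarrow> is_subring {z. integral_over K z}"
  unfolding is_subring_def
  by (auto intro: integral_over_const integral_over_add integral_over_mult integral_over_uminus
      simp: is_subring_def[symmetric] subring_zero subring_one)

lemma integral_over_imp_algebraic_over:
  fixes z :: "'a::idom"
  assumes K: "is_subring K" and "integral_over K z"
  shows "algebraic_over K z"
proof -
  obtain S where S: "finite S" "1 \<in> span_over K S" "stabilizes K S z"
    using assms(2) integral_over_def by blast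
  have "\<forall>i\<in>{..card S}. z ^ i \<in> span_over K S" using power_in_stabilized_span S by blast
  then obtain g where "\<forall>i\<in>{..card S}. g i \<in> K" "\<exists>i\<in>{..card S}. g i \<noteq> 0"
      "(\<Sum>i\<in>{..card S}. g i * z ^ i) = 0"
    using span_over_dependent[OF K S(1), of "{..card S}" "\<lambda>i. z ^ i"] by auto
  then show ?thesis by (intro algebraic_over_sumI[OF K, of "{..card S}" g]) auto
qed

text \<open>An annihilating polynomial of least degree has a nonzero constant term.\<close>
lemma algebraic_over_nonzero_root:
  fixes q :: "'a::idom"
  assumes "algebraic_over K q" "q \<noteq> 0"
  obtains a p where "a \<in> K" "a \<noteq> 0" "\<forall>i. coeff p i \<in> K" "a + q * poly p q = 0"
proof -
  let ?ann = "\<lambda>p. p \<noteq> 0 \<and> (\<forall>i. coeff p i \<in> K) \<and> poly p q = 0"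
  obtain p where p: "?ann p" and p_min: "\<And>p'. ?ann p' \<Longrightarrow> degree p \<le> degree p'"
    using ex_has_least_nat[of ?ann _ degree] assms(1) unfolding algebraic_over_def by blast
  obtain a p1 where a_p1: "p = pCons a p1" by (cases p)
  have coeffs: "a \<in> K" "\<forall>i. coeff p1 i \<in> K"
    using p a_p1 by (metis coeff_pCons_0, metis coeff_pCons_Suc)
  have "a \<noteq> 0"
  proof
    assume "a = 0"
    then have "?ann p1" using p a_p1 coeffs(2) assms(2) by auto
    then show False using p_min[of p1] p a_p1 by auto
  qed
  with coeffs p a_p1 show ?thesis by (intro that) auto
qed

lemma stabilizes_inverse:
  fixes q :: "'a::field"
  assumes K: "is_subfield K" and S: "finite S" "1 \<in> span_over K S" "stabilizes K S q"
  shows "stabilizes K S (inverse q)"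
proof -
  have Kr: "is_subring K" using subfield_imp_subring[OF K] .
  show ?thesis
  proof (cases "q = 0")
    case True
    then show ?thesis using stabilizes_scalar[OF Kr subring_zero[OF Kr]] by simp
  next
    case False
    have "algebraic_over K q" using integral_over_imp_algebraic_over[OF Kr] S integral_over_def by blast
    then obtain a p where ap: "a \<in> K" "a \<noteq> 0" "\<forall>i. coeff p i \<in> K" "a + q * poly p q = 0"
      using False by (rule algebraic_over_nonzero_root)
    then have "inverse q = - inverse a * poly p q"
      using False by (simp add: field_simps) (metis add.commute add_eq_0_iff mult.commute)
    moreover have "stabilizes K S (- inverse a * poly p q)"
      using stabilizes_mult[OF stabilizes_uminus[OF Kr stabilizes_scalar[OF Kr subfield_inverse[OF K ap(1)]]]
          stabilizes_poly[OF Kr S(3) ap(3)]] .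
    ultimately show ?thesis by simp
  qed
qed

lemma stabilizes_root_of_monic:
  assumes K: "is_subring K" and S: "finite S"
    and c: "\<forall>j<e. stabilizes K S (c j)" and z: "z ^ e = (\<Sum>j<e. c j * z ^ j)"
  shows "stabilizes K (products S ((\<lambda>i. z ^ i) ` {..<e})) z"
proof (rule stabilizesI[OF K], intro ballI)
  define T where "T = (\<lambda>i. z ^ i) ` {..<e}"
  have T: "finite T" "\<And>j. j < e \<Longrightarrow> z ^ j \<in> span_over K T"
    unfolding T_def by (auto intro: span_over_base[OF K])
  fix v assume "v \<in> products S ((\<lambda>i. z ^ i) ` {..<e})"
  then obtain s i where si: "s \<in> S" "i < e" "v = s * z ^ i" unfolding products_def by auto
  have s: "s \<in> span_over K S" using span_over_base[OF K S si(1)] .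
  show "z * v \<in> span_over K (products S T)"
  proof (cases "Suc i < e")
    case True
    have "z * v = s * z ^ Suc i" using si(3) by (simp add: algebra_simps)
    then show ?thesis using span_over_mult[OF K S T(1) s T(2)[OF True]] by simp
  next
    case False
    then have "Suc i = e" using si(2) by simp
    then have "z * v = s * z ^ e" using si(3) by (auto simp: algebra_simps)
    also have "\<dots> = (\<Sum>j<e. (c j * s) * z ^ j)"
      by (simp add: z sum_distrib_left algebra_simps)
    also have "\<dots> \<in> span_over K (products S T)"
      using c s T by (intro span_over_sum[OF K] span_over_mult[OF K S]) (auto intro: stabilizesD)
    finally show ?thesis .
  qed
qed

lemma integral_over_root:
  fixes z :: "'a::field"
  assumes K: "is_subfield K" and u: "u \<noteq> 0" "\<forall>i. integral_over K (coeff u i)" "poly u z = 0"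
  shows "integral_over K z"
proof -
  have Kr: "is_subring K" using subfield_imp_subring[OF K] .
  define e where "e = degree u"
  define c where "c j = - (inverse (lead_coeff u) * coeff u j)" for j
  obtain S where S: "finite S" "1 \<in> span_over K S" "\<forall>x\<in>coeff u ` {..e}. stabilizes K S x"
    using integral_over_common_span[OF Kr, of "coeff u ` {..e}"] u(2) by auto
  have "stabilizes K S (inverse (lead_coeff u))"
    using stabilizes_inverse[OF K S(1,2)] S(3) e_def by simp
  then have c_stab: "\<forall>j<e. stabilizes K S (c j)"
    using S(3) Kr unfolding c_def by (auto intro!: stabilizes_uminus stabilizes_mult)
  have "0 = (\<Sum>i\<le>e. coeff u i * z ^ i)" using u(3) poly_altdef[of u z] e_def by simp
  also have "\<dots> = lead_coeff u * z ^ e + (\<Sum>i<e. coeff u i * z ^ i)"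
    by (simp add: e_def lessThan_Suc_atMost[symmetric])
  finally have "z ^ e = - inverse (lead_coeff u) * (\<Sum>i<e. coeff u i * z ^ i)"
    using u(1) by (simp add: field_simps) (metis add.commute add_eq_0_iff)
  then have z_e: "z ^ e = (\<Sum>j<e. c j * z ^ j)"
    unfolding c_def by (simp add: sum_distrib_left algebra_simps)
  have "e > 0"
  proof (rule ccontr)
    assume "\<not> e > 0"
    then have "u = [:lead_coeff u:]" using e_def by (metis degree_0_id gr0I)
    then show False using u(1,3) by (metis leading_coeff_neq_0 poly_const_conv)
  qed
  then have "1 \<in> span_over K ((\<lambda>i. z ^ i) ` {..<e})" by (intro span_over_base[OF Kr]) force+
  then have "1 * 1 \<in> span_over K (products S ((\<lambda>i. z ^ i) ` {..<e}))"
    using S(1,2) by (intro span_over_mult[OF Kr]) auto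
  then show ?thesis
    unfolding integral_over_def
    using stabilizes_root_of_monic[OF Kr S(1) c_stab z_e] finite_products[OF S(1)] by auto
qed

lemma root_closed_integral_over:
  assumes K: "is_subfield K"
  shows "root_closed {z. integral_over K z}"
  unfolding root_closed_def algebraic_over_def using integral_over_root[OF K] by auto

section \<open>Power series with finitely supported exponents\<close>

definition finite_supp :: "(nat \<Rightarrow> nat) \<Rightarrow> bool" where
  "finite_supp I \<longleftrightarrow> finite {i. I i \<noteq> 0}"

definition exps_below :: "(nat \<Rightarrow> nat) \<Rightarrow> (nat \<Rightarrow> nat) set" where
  "exps_below I = {J. \<forall>i. J i \<le> I i}"

lemma mps_mult_exps_below: "mps_mult f g I = (\<Sum>J\<in>exps_below I. f J * g (\<lambda>i. I i - J i))"
  unfolding mps_mult_def exps_below_def by simp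

lemma finite_supp_zero: "finite_supp (\<lambda>_. 0)"
  unfolding finite_supp_def by simp

lemma finite_supp_le:
  assumes "finite_supp I" "\<And>i. J i \<le> I i"
  shows "finite_supp J"
proof -
  have "{i. J i \<noteq> 0} \<subseteq> {i. I i \<noteq> 0}"
  proof (intro subsetI CollectI)
    fix i assume "i \<in> {i. J i \<noteq> 0}"
    then show "I i \<noteq> 0" using assms(2)[of i] by auto
  qed
  then show ?thesis using assms(1) unfolding finite_supp_def by (rule finite_subset)
qed

lemma finite_supp_below: "finite_supp I \<Longrightarrow> J \<in> exps_below I \<Longrightarrow> finite_supp J"
  by (rule finite_supp_le[of I]) (auto simp: exps_below_def)

lemma finite_supp_diff: "finite_supp I \<Longrightarrow> finite_supp (\<lambda>i. I i - J i)"
  by (rule finite_supp_le[of I]) simp_all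

lemma finite_exps_below:
  assumes "finite_supp I"
  shows "finite (exps_below I)"
proof -
  let ?A = "{i. I i \<noteq> 0}"
  let ?B = "{..(\<Sum>i\<in>?A. I i)}"
  have "finite ?A" using assms unfolding finite_supp_def .
  then have bound: "I i \<le> (\<Sum>i\<in>?A. I i)" for i by (cases "i \<in> ?A") (auto intro: member_le_sum)
  have "exps_below I \<subseteq> {J. \<forall>i. (i \<in> ?A \<longrightarrow> J i \<in> ?B) \<and> (i \<notin> ?A \<longrightarrow> J i = 0)}"
  proof (intro subsetI CollectI allI conjI impI)
    fix J i assume "J \<in> exps_below I"
    then have "J i \<le> I i" by (simp add: exps_below_def)
    then show "J i \<in> ?B" "i \<notin> ?A \<Longrightarrow> J i = 0" using bound[of i] by auto
  qed
  moreover have "finite {J. \<forall>i. (i \<in> ?A \<longrightarrow> J i \<in> ?B) \<and> (i \<notin> ?A \<longrightarrow> J i = (0::nat))}"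
    using \<open>finite ?A\<close> by (intro finite_set_of_finite_funs) auto
  ultimately show ?thesis by (rule finite_subset)
qed

lemma exps_below_Sigma_reindex:
  "(\<Sum>(K, J)\<in>Sigma (exps_below I) exps_below. F K J) =
   (\<Sum>(J, K)\<in>Sigma (exps_below I) (\<lambda>J. exps_below (\<lambda>i. I i - J i)). F (\<lambda>i. J i + K i) J)"
proof (rule sum.reindex_bij_witness[where i="\<lambda>(J, K). (\<lambda>i. J i + K i, J)" and j="\<lambda>(K, J). (J, \<lambda>i. K i - J i)"])
  fix a assume "a \<in> Sigma (exps_below I) exps_below"
  then obtain K J where a: "a = (K, J)" "\<forall>i. K i \<le> I i" "\<forall>i. J i \<le> K i"
    by (auto simp: exps_below_def)
  then show "(case (case a of (K, J) \<Rightarrow> (J, \<lambda>i. K i - J i)) of (J, K) \<Rightarrow> (\<lambda>i. J i + K i, J)) = a"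
    "(case a of (K, J) \<Rightarrow> (J, \<lambda>i. K i - J i)) \<in> Sigma (exps_below I) (\<lambda>J. exps_below (\<lambda>i. I i - J i))"
    "(case (case a of (K, J) \<Rightarrow> (J, \<lambda>i. K i - J i)) of (J, K) \<Rightarrow> F (\<lambda>i. J i + K i) J) = (case a of (K, J) \<Rightarrow> F K J)"
    by (auto simp: exps_below_def fun_eq_iff intro: le_trans diff_le_mono)
next
  fix b assume "b \<in> Sigma (exps_below I) (\<lambda>J. exps_below (\<lambda>i. I i - J i))"
  then obtain J K where b: "b = (J, K)" "\<forall>i. J i \<le> I i" "\<forall>i. K i \<le> I i - J i"
    by (auto simp: exps_below_def)
  then show "(case (case b of (J, K) \<Rightarrow> (\<lambda>i. J i + K i, J)) of (K, J) \<Rightarrow> (J, \<lambda>i. K i - J i)) = b"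
    "(case b of (J, K) \<Rightarrow> (\<lambda>i. J i + K i, J)) \<in> Sigma (exps_below I) exps_below"
    by (auto simp: exps_below_def fun_eq_iff) (metis le_add_diff_inverse nat_add_left_cancel_le)
qed

lemma convolution_commute:
  "(\<Sum>J\<in>exps_below I. f J * g (\<lambda>i. I i - J i)) = (\<Sum>J\<in>exps_below I. g J * f (\<lambda>i. I i - J i))"
  for f g :: "(nat \<Rightarrow> nat) \<Rightarrow> 'a::comm_semiring_1"
  by (rule sum.reindex_bij_witness[where i="\<lambda>J i. I i - J i" and j="\<lambda>J i. I i - J i"])
    (auto simp: exps_below_def mult.commute fun_eq_iff)

lemma convolution_assoc:
  fixes f g h :: "(nat \<Rightarrow> nat) \<Rightarrow> 'a::comm_semiring_1"
  assumes I: "finite_supp I"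
  shows "(\<Sum>K\<in>exps_below I. (\<Sum>J\<in>exps_below K. f J * g (\<lambda>i. K i - J i)) * h (\<lambda>i. I i - K i)) =
         (\<Sum>J\<in>exps_below I. f J * (\<Sum>K\<in>exps_below (\<lambda>i. I i - J i). g K * h (\<lambda>i. I i - J i - K i)))"
proof -
  have fin: "finite (exps_below I)" "\<forall>K\<in>exps_below I. finite (exps_below K)"
      "\<forall>J\<in>exps_below I. finite (exps_below (\<lambda>i. I i - J i))"
    using I by (auto intro!: finite_exps_below finite_supp_diff intro: finite_supp_below)
  have "(\<Sum>K\<in>exps_below I. (\<Sum>J\<in>exps_below K. f J * g (\<lambda>i. K i - J i)) * h (\<lambda>i. I i - K i)) =
        (\<Sum>(K, J)\<in>Sigma (exps_below I) exps_below. f J * g (\<lambda>i. K i - J i) * h (\<lambda>i. I i - K i))"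
    by (subst sum.Sigma[OF fin(1,2), symmetric]) (simp add: sum_distrib_right)
  also have "\<dots> = (\<Sum>(J, K)\<in>Sigma (exps_below I) (\<lambda>J. exps_below (\<lambda>i. I i - J i)).
       f J * g (\<lambda>i. J i + K i - J i) * h (\<lambda>i. I i - (J i + K i)))"
    by (rule exps_below_Sigma_reindex)
  also have "\<dots> = (\<Sum>(J, K)\<in>Sigma (exps_below I) (\<lambda>J. exps_below (\<lambda>i. I i - J i)).
       f J * (g K * h (\<lambda>i. I i - J i - K i)))"
    by (intro sum.cong refl) (auto simp: mult.assoc diff_diff_left)
  also have "\<dots> = (\<Sum>J\<in>exps_below I. f J * (\<Sum>K\<in>exps_below (\<lambda>i. I i - J i). g K * h (\<lambda>i. I i - J i - K i)))"
    by (subst sum.Sigma[OF fin(1,3), symmetric]) (simp add: sum_distrib_left)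
  finally show ?thesis .
qed

text \<open>Power series in countably many variables, restricted to finitely supported exponent
  vectors so that the convolution \<open>mps_mult\<close> is a finite sum.\<close>
typedef (overloaded) 'a mps = "{f :: (nat \<Rightarrow> nat) \<Rightarrow> 'a::zero. \<forall>I. \<not> finite_supp I \<longrightarrow> f I = 0}"
  morphisms mps_nth Abs_mps
  by (rule exI[of _ "\<lambda>_. 0"]) auto

setup_lifting type_definition_mps

lemma mps_nth_not_finite_supp: "\<not> finite_supp I \<Longrightarrow> mps_nth f I = 0"
  using mps_nth by auto

lemma mps_eqI: "(\<And>I. finite_supp I \<Longrightarrow> mps_nth f I = mps_nth g I) \<Longrightarrow> f = g"
  by (metis mps_nth_inject mps_nth_not_finite_supp ext)

instantiation mps :: (comm_ring_1) comm_ring_1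
begin

lift_definition zero_mps :: "'a mps" is "\<lambda>_. 0"
  by simp

lift_definition one_mps :: "'a mps" is "\<lambda>I. if I = (\<lambda>_. 0) then 1 else 0"
  using finite_supp_zero by auto

lift_definition plus_mps :: "'a mps \<Rightarrow> 'a mps \<Rightarrow> 'a mps" is "\<lambda>f g I. f I + g I"
  by simp

lift_definition minus_mps :: "'a mps \<Rightarrow> 'a mps \<Rightarrow> 'a mps" is "\<lambda>f g I. f I - g I"
  by simp

lift_definition uminus_mps :: "'a mps \<Rightarrow> 'a mps" is "\<lambda>f I. - f I"
  by simp

lift_definition times_mps :: "'a mps \<Rightarrow> 'a mps \<Rightarrow> 'a mps" is
  "\<lambda>f g I. if finite_supp I then mps_mult f g I else 0"
  by simp

instance
proof
  fix a b c :: "'a mps"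
  show "a * b * c = a * (b * c)"
  proof (rule mps_eqI)
    fix I assume I: "finite_supp I"
    show "mps_nth (a * b * c) I = mps_nth (a * (b * c)) I"
      using convolution_assoc[OF I, of "mps_nth a" "mps_nth b" "mps_nth c"] I
      by (simp add: times_mps.rep_eq mps_mult_exps_below finite_supp_below finite_supp_diff cong: sum.cong)
  qed
  show "a * b = b * a"
    by transfer (simp add: fun_eq_iff mps_mult_exps_below convolution_commute)
  show "1 * a = a"
  proof (rule mps_eqI)
    fix I assume I: "finite_supp I"
    have "(\<Sum>J\<in>exps_below I. (if J = (\<lambda>_. 0) then 1 else 0) * mps_nth a (\<lambda>i. I i - J i)) =
          (\<Sum>J\<in>exps_below I. if J = (\<lambda>_. 0) then mps_nth a (\<lambda>i. I i - J i) else 0)"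
      by (intro sum.cong) auto
    also have "\<dots> = mps_nth a I" using finite_exps_below[OF I] by (simp add: exps_below_def)
    finally show "mps_nth (1 * a) I = mps_nth a I"
      using I by (simp add: times_mps.rep_eq one_mps.rep_eq mps_mult_exps_below)
  qed
  show "(a + b) * c = a * c + b * c"
    by transfer (simp add: fun_eq_iff mps_mult_exps_below distrib_right sum.distrib)
  show "(0::'a mps) \<noteq> 1"
    by transfer (metis zero_neq_one)
  show "a + b + c = a + (b + c)" by transfer (simp add: add.assoc)
  show "a + b = b + a" by transfer (simp add: add.commute)
  show "0 + a = a" by transfer simp
  show "- a + a = 0" by transfer simp
  show "a - b = a + - b" by transfer simp
qed

end

lemma mps_nth_add: "mps_nth (f + g) I = mps_nth f I + mps_nth g I"
  by transfer simp

lemma mps_nth_uminus: "mps_nth (- f) I = - mps_nth f I"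
  by transfer simp

lemma mps_nth_diff: "mps_nth (f - g) I = mps_nth f I - mps_nth g I"
  by transfer simp

lemma mps_nth_zero: "mps_nth 0 I = 0"
  by transfer simp

lemma mps_nth_one: "mps_nth 1 I = (if I = (\<lambda>_. 0) then 1 else 0)"
  by transfer simp

lemma mps_nth_mult:
  "mps_nth (f * g) I = (if finite_supp I then (\<Sum>J\<in>exps_below I. mps_nth f J * mps_nth g (\<lambda>i. I i - J i)) else 0)"
  by transfer (simp add: mps_mult_exps_below)

lemma mps_nth_sum: "mps_nth (sum F A) I = (\<Sum>a\<in>A. mps_nth (F a) I)"
  by (induction A rule: infinite_finite_induct) (auto simp: mps_nth_zero mps_nth_add)

lemma mps_nonzero_nth: "f \<noteq> 0 \<Longrightarrow> \<exists>N. mps_nth f N \<noteq> 0"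
  by (metis mps_eqI mps_nth_zero)

section \<open>The reverse lexicographic order\<close>

definition exps_except :: "nat \<Rightarrow> nat \<Rightarrow> (nat \<Rightarrow> nat) set" where
  "exps_except n l = {M. \<forall>i. (n \<le> i \<or> i = l) \<longrightarrow> M i = 0}"

definition revlex_less :: "nat \<Rightarrow> (nat \<Rightarrow> nat) \<Rightarrow> (nat \<Rightarrow> nat) \<Rightarrow> bool" where
  "revlex_less n M M' \<longleftrightarrow> (\<exists>k<n. M k < M' k \<and> (\<forall>i. k < i \<and> i < n \<longrightarrow> M i = M' i))"

definition revlex_le :: "nat \<Rightarrow> (nat \<Rightarrow> nat) \<Rightarrow> (nat \<Rightarrow> nat) \<Rightarrow> bool" where
  "revlex_le n M M' \<longleftrightarrow> M = M' \<or> revlex_less n M M'"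

lemma exps_except_finite_supp: "M \<in> exps_except n l \<Longrightarrow> finite_supp M"
  unfolding exps_except_def finite_supp_def
  by (rule finite_subset[of _ "{..<n}"]) (auto simp: not_less[symmetric])

lemma exps_except_zero: "(\<lambda>_. 0) \<in> exps_except n l"
  unfolding exps_except_def by simp

lemma exps_except_add: "M \<in> exps_except n l \<Longrightarrow> N \<in> exps_except n l \<Longrightarrow> (\<lambda>i. M i + N i) \<in> exps_except n l"
  unfolding exps_except_def by simp

lemma exps_except_le:
  assumes "M \<in> exps_except n l" "\<And>i. J i \<le> M i"
  shows "J \<in> exps_except n l"
  unfolding exps_except_def
proof (intro CollectI allI impI)
  fix i assume "n \<le> i \<or> i = l"
  then have "M i = 0" using assms(1) by (auto simp: exps_except_def)
  then show "J i = 0" using assms(2)[of i] by simp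
qed

lemma exps_except_diff: "M \<in> exps_except n l \<Longrightarrow> (\<lambda>i. M i - J i) \<in> exps_except n l"
  by (erule exps_except_le) simp

lemma revlex_less_irrefl: "\<not> revlex_less n M M"
  unfolding revlex_less_def by auto

lemma revlex_less_trans:
  assumes "revlex_less n a b" "revlex_less n b c"
  shows "revlex_less n a c"
proof -
  obtain k1 where k1: "k1 < n" "a k1 < b k1" "\<forall>i. k1 < i \<and> i < n \<longrightarrow> a i = b i"
    using assms(1) revlex_less_def by blast
  obtain k2 where k2: "k2 < n" "b k2 < c k2" "\<forall>i. k2 < i \<and> i < n \<longrightarrow> b i = c i"
    using assms(2) revlex_less_def by blast
  show ?thesis
    unfolding revlex_less_def
  proof (cases k1 k2 rule: linorder_cases)
    case less
    then show "\<exists>k<n. a k < c k \<and> (\<forall>i. k < i \<and> i < n \<longrightarrow> a i = c i)"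
      using k1 k2 by (intro exI[of _ k2]) auto
  next
    case equal
    then show "\<exists>k<n. a k < c k \<and> (\<forall>i. k < i \<and> i < n \<longrightarrow> a i = c i)"
      using k1 k2 by (intro exI[of _ k2]) auto
  next
    case greater
    then show "\<exists>k<n. a k < c k \<and> (\<forall>i. k < i \<and> i < n \<longrightarrow> a i = c i)"
      using k1 k2 by (intro exI[of _ k1]) auto
  qed
qed

lemma revlex_less_le_trans: "revlex_less n a b \<Longrightarrow> revlex_le n b c \<Longrightarrow> revlex_less n a c"
  unfolding revlex_le_def using revlex_less_trans by blast

lemma revlex_less_add_right: "revlex_less n a b \<Longrightarrow> revlex_less n (\<lambda>i. a i + c i) (\<lambda>i. b i + c i)"
  unfolding revlex_less_def by auto

lemma revlex_less_add_left: "revlex_less n a b \<Longrightarrow> revlex_less n (\<lambda>i. c i + a i) (\<lambda>i. c i + b i)"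
  unfolding revlex_less_def by auto

lemma revlex_less_le_add:
  "revlex_less n a a' \<Longrightarrow> revlex_le n b b' \<Longrightarrow> revlex_less n (\<lambda>i. a i + b i) (\<lambda>i. a' i + b' i)"
  unfolding revlex_le_def using revlex_less_add_right revlex_less_add_left revlex_less_trans by blast

lemma revlex_le_add:
  "revlex_le n a a' \<Longrightarrow> revlex_le n b b' \<Longrightarrow> revlex_le n (\<lambda>i. a i + b i) (\<lambda>i. a' i + b' i)"
proof (cases "a = a'")
  case True
  assume "revlex_le n b b'"
  then show ?thesis
    unfolding revlex_le_def using True revlex_less_add_left[of n b b' a] by auto
next
  case False
  assume "revlex_le n a a'" "revlex_le n b b'"
  then show ?thesis
    using False revlex_less_le_add[of n a a' b b'] unfolding revlex_le_def by blast
qed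

lemma revlex_less_total:
  assumes "M \<in> exps_except n l" "M' \<in> exps_except n l" "M \<noteq> M'"
  shows "revlex_less n M M' \<or> revlex_less n M' M"
proof -
  let ?D = "{i. i < n \<and> M i \<noteq> M' i}"
  have "?D \<noteq> {}"
  proof
    assume "?D = {}"
    then have "M i = M' i" for i using assms(1,2) unfolding exps_except_def by (cases "i < n") auto
    then show False using assms(3) by auto
  qed
  then have "Max ?D \<in> ?D" by (intro Max_in) simp_all
  moreover have "\<forall>i. Max ?D < i \<and> i < n \<longrightarrow> M i = M' i"
  proof (intro allI impI; rule ccontr)
    fix i assume i: "Max ?D < i \<and> i < n" "M i \<noteq> M' i"
    then have "i \<le> Max ?D" by (intro Max_ge) simp_all
    then show False using i(1) leD by blast
  qed
  ultimately show ?thesis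
    unfolding revlex_less_def by (metis (mono_tags, lifting) linorder_neqE_nat mem_Collect_eq)
qed

lemma revlex_less_imp_lex:
  assumes "revlex_less n M M'"
  shows "(map M (rev [0..<n]), map M' (rev [0..<n])) \<in> lex {(x, y). x < y}"
proof -
  obtain k where k: "k < n" "M k < M' k" "\<forall>i. k < i \<and> i < n \<longrightarrow> M i = M' i"
    using assms unfolding revlex_less_def by blast
  have "[0..<n] = [0..<k] @ k # [Suc k..<n]"
    using k(1) upt_add_eq_append[of 0 k "n - k"] upt_conv_Cons[of k n] by simp
  then have r: "rev [0..<n] = rev [Suc k..<n] @ k # rev [0..<k]" by simp
  have m: "map M (rev [Suc k..<n]) = map M' (rev [Suc k..<n])" using k(3) by auto
  have "map M (rev [0..<n]) = map M (rev [Suc k..<n]) @ M k # map M (rev [0..<k])"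
    "map M' (rev [0..<n]) = map M (rev [Suc k..<n]) @ M' k # map M' (rev [0..<k])"
    using r m by simp_all
  then show ?thesis unfolding lex_conv using k(2) by auto
qed

lemma wf_revlex_less: "wf {(M, M'). revlex_less n M M'}"
proof -
  have "{(M, M'). revlex_less n M M'} \<subseteq> inv_image (lex {(x, y). x < y}) (\<lambda>M. map M (rev [0..<n]))"
    using revlex_less_imp_lex by auto
  moreover have "wf (inv_image (lex {(x::nat, y). x < y}) (\<lambda>M. map M (rev [0..<n])))"
    by (intro wf_inv_image wf_lex wf_less)
  ultimately show ?thesis using wf_subset by blast
qed

lemma revlex_least_exists:
  assumes "X \<noteq> {}" "X \<subseteq> exps_except n l"
  obtains a where "a \<in> X" "\<forall>y\<in>X. revlex_le n a y"
proof -
  obtain a where a: "a \<in> X" "\<And>y. (y, a) \<in> {(M, M'). revlex_less n M M'} \<Longrightarrow> y \<notin> X"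
    using wfE_min[OF wf_revlex_less, of _ X] assms(1) by blast
  have "revlex_le n a y" if y: "y \<in> X" for y
  proof (cases "y = a")
    case False
    then have "revlex_less n a y \<or> revlex_less n y a"
      using revlex_less_total[of a n l y] assms(2) a(1) y by blast
    then show ?thesis using a(2) y unfolding revlex_le_def by blast
  qed (simp add: revlex_le_def)
  with a(1) that show ?thesis by blast
qed

section \<open>Lowest terms and coefficients of roots\<close>

definition mps_supp_except :: "nat \<Rightarrow> nat \<Rightarrow> 'a::comm_ring_1 mps \<Rightarrow> bool" where
  "mps_supp_except n l f \<longleftrightarrow> (\<forall>M. M \<notin> exps_except n l \<longrightarrow> mps_nth f M = 0)"

definition revlex_lower_bound :: "nat \<Rightarrow> nat \<Rightarrow> 'a::comm_ring_1 mps \<Rightarrow> (nat \<Rightarrow> nat) \<Rightarrow> bool" where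
  "revlex_lower_bound n l f a \<longleftrightarrow> a \<in> exps_except n l \<and> mps_supp_except n l f \<and>
     (\<forall>N. mps_nth f N \<noteq> 0 \<longrightarrow> revlex_le n a N)"

lemma mps_supp_except_mult:
  assumes f: "mps_supp_except n l f" and g: "mps_supp_except n l g"
  shows "mps_supp_except n l (f * g)"
  unfolding mps_supp_except_def
proof (intro allI impI)
  fix M assume "M \<notin> exps_except n l"
  have "mps_nth f J * mps_nth g (\<lambda>i. M i - J i) = 0" if "J \<in> exps_below M" for J
  proof -
    have "J \<notin> exps_except n l \<or> (\<lambda>i. M i - J i) \<notin> exps_except n l"
      using \<open>M \<notin> exps_except n l\<close> that exps_except_add[of J n l "\<lambda>i. M i - J i"]
      by (auto simp: exps_below_def le_add_diff_inverse)
    then show ?thesis using f g unfolding mps_supp_except_def by auto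
  qed
  then show "mps_nth (f * g) M = 0" by (simp add: mps_nth_mult)
qed

lemma revlex_lower_bound_one: "revlex_lower_bound n l 1 (\<lambda>_. 0)"
  unfolding revlex_lower_bound_def mps_supp_except_def revlex_le_def
  using exps_except_zero by (auto simp: mps_nth_one)

text \<open>The coefficient at the sum of two lower bounds is the product of the coefficients:
  every other splitting of that exponent is strictly bigger in one of the factors.\<close>
lemma revlex_lower_bound_mult:
  assumes f: "revlex_lower_bound n l f a" and g: "revlex_lower_bound n l g b"
  shows "revlex_lower_bound n l (f * g) (\<lambda>i. a i + b i)"
    and "mps_nth (f * g) (\<lambda>i. a i + b i) = mps_nth f a * mps_nth g b"
proof -
  have fa: "\<And>N. mps_nth f N \<noteq> 0 \<Longrightarrow> revlex_le n a N"
    and gb: "\<And>N. mps_nth g N \<noteq> 0 \<Longrightarrow> revlex_le n b N"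
    using f g unfolding revlex_lower_bound_def by blast+
  have split: "(\<lambda>i. J i + (N i - J i)) = N" if "J \<in> exps_below N" for J N
    using that by (auto simp: exps_below_def)
  have "revlex_le n (\<lambda>i. a i + b i) N" if N: "mps_nth (f * g) N \<noteq> 0" for N
  proof -
    have "finite_supp N" using N mps_nth_not_finite_supp by blast
    then have "(\<Sum>J\<in>exps_below N. mps_nth f J * mps_nth g (\<lambda>i. N i - J i)) \<noteq> 0"
      using N by (simp add: mps_nth_mult)
    then obtain J where "J \<in> exps_below N" "mps_nth f J * mps_nth g (\<lambda>i. N i - J i) \<noteq> 0"
      using sum.not_neutral_contains_not_neutral by blast
    then have J: "J \<in> exps_below N" "mps_nth f J \<noteq> 0" "mps_nth g (\<lambda>i. N i - J i) \<noteq> 0"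
      by auto
    show ?thesis using revlex_le_add[OF fa[OF J(2)] gb[OF J(3)]] split[OF J(1)] by simp
  qed
  then show "revlex_lower_bound n l (f * g) (\<lambda>i. a i + b i)"
    using f g mps_supp_except_mult exps_except_add unfolding revlex_lower_bound_def by blast
  have ab: "finite_supp (\<lambda>i. a i + b i)"
    using f g exps_except_add exps_except_finite_supp unfolding revlex_lower_bound_def by blast
  have "mps_nth f J * mps_nth g (\<lambda>i. a i + b i - J i) = 0"
    if J: "J \<in> exps_below (\<lambda>i. a i + b i)" "J \<noteq> a" for J
  proof (rule ccontr)
    assume "\<not> ?thesis"
    then have "mps_nth f J \<noteq> 0" "mps_nth g (\<lambda>i. a i + b i - J i) \<noteq> 0" by auto
    then have "revlex_less n a J" "revlex_le n b (\<lambda>i. a i + b i - J i)"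
      using fa gb J(2) unfolding revlex_le_def by blast+
    from revlex_less_le_add[OF this] show False
      using split[OF J(1)] revlex_less_irrefl by metis
  qed
  moreover have "a \<in> exps_below (\<lambda>i. a i + b i)" by (simp add: exps_below_def)
  ultimately show "mps_nth (f * g) (\<lambda>i. a i + b i) = mps_nth f a * mps_nth g b"
    using finite_exps_below[OF ab] ab
    by (simp add: mps_nth_mult sum.remove[of _ a] sum.neutral)
qed

lemma revlex_lower_bound_power:
  assumes "revlex_lower_bound n l f a"
  shows "revlex_lower_bound n l (f ^ k) (\<lambda>i. k * a i)"
    and "mps_nth (f ^ k) (\<lambda>i. k * a i) = mps_nth f a ^ k"
proof (induction k)
  case 0
  show "revlex_lower_bound n l (f ^ 0) (\<lambda>i. 0 * a i)" "mps_nth (f ^ 0) (\<lambda>i. 0 * a i) = mps_nth f a ^ 0"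
    using revlex_lower_bound_one by (simp_all add: mps_nth_one)
next
  case (Suc k)
  have e: "(\<lambda>i. Suc k * a i) = (\<lambda>i. a i + k * a i)" by simp
  show "revlex_lower_bound n l (f ^ Suc k) (\<lambda>i. Suc k * a i)"
    "mps_nth (f ^ Suc k) (\<lambda>i. Suc k * a i) = mps_nth f a ^ Suc k"
    unfolding e power_Suc using revlex_lower_bound_mult[OF assms Suc(1)] Suc(2) by simp_all
qed

lemma revlex_lower_bound_exists:
  assumes "f \<noteq> 0" "mps_supp_except n l f"
  obtains a where "revlex_lower_bound n l f a" "mps_nth f a \<noteq> 0"
proof -
  let ?X = "{N. mps_nth f N \<noteq> 0}"
  have "?X \<noteq> {}" using mps_nonzero_nth[OF assms(1)] by blast
  moreover have "?X \<subseteq> exps_except n l" using assms(2) unfolding mps_supp_except_def by blast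
  ultimately obtain a where "a \<in> ?X" "\<forall>y\<in>?X. revlex_le n a y"
    by (rule revlex_least_exists)
  then show ?thesis
    using that \<open>?X \<subseteq> exps_except n l\<close> assms(2) unfolding revlex_lower_bound_def by blast
qed

lemma mps_nth_sum_at_lower_bound:
  assumes A: "finite A" and bound: "\<forall>i\<in>A. revlex_lower_bound n l (F i) (e i)"
    and mu: "\<forall>i\<in>A. revlex_le n mu (e i)"
  shows "mps_nth (\<Sum>i\<in>A. F i) mu = (\<Sum>i\<in>{i\<in>A. e i = mu}. mps_nth (F i) mu)"
proof -
  have "mps_nth (F i) mu = 0" if "i \<in> A" "e i \<noteq> mu" for i
  proof (rule ccontr)
    assume "mps_nth (F i) mu \<noteq> 0"
    then have "revlex_le n (e i) mu" using bound that(1) unfolding revlex_lower_bound_def by blast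
    moreover have "revlex_less n mu (e i)" using mu that unfolding revlex_le_def by auto
    ultimately show False using revlex_less_le_trans revlex_less_irrefl by blast
  qed
  then show ?thesis
    using A by (auto simp: mps_nth_sum sum.inter_filter intro: sum.cong)
qed

text \<open>Compare the coefficients of \<open>Q(T)\<close> at the least of the lowest exponents of the terms
  \<open>coeff Q i * T ^ i\<close>: only terms with that lowest exponent contribute.\<close>
lemma lowest_coeff_algebraic:
  fixes T :: "'a::comm_ring_1 mps" and Q :: "'a mps poly"
  assumes R: "is_subring R" and T: "revlex_lower_bound n l T M"
    and Q: "Q \<noteq> 0" "\<forall>i. mps_supp_except n l (coeff Q i)" "\<forall>i N. mps_nth (coeff Q i) N \<in> R"
    and root: "poly Q T = 0"
  shows "algebraic_over R (mps_nth T M)"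
proof -
  define IS where "IS = {i. i \<le> degree Q \<and> coeff Q i \<noteq> 0}"
  have "\<exists>a. revlex_lower_bound n l (coeff Q i) a \<and> mps_nth (coeff Q i) a \<noteq> 0" if "i \<in> IS" for i
  proof -
    have "coeff Q i \<noteq> 0" using that by (simp add: IS_def)
    then obtain a where "revlex_lower_bound n l (coeff Q i) a" "mps_nth (coeff Q i) a \<noteq> 0"
      by (rule revlex_lower_bound_exists[OF _ Q(2)[rule_format]])
    then show ?thesis by blast
  qed
  then obtain m where m: "\<And>i. i \<in> IS \<Longrightarrow> revlex_lower_bound n l (coeff Q i) (m i) \<and> mps_nth (coeff Q i) (m i) \<noteq> 0"
    by metis
  define e where "e i = (\<lambda>j. m i j + i * M j)" for i
  define c where "c i = mps_nth (coeff Q i) (m i)" for i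
  define t where "t = mps_nth T M"
  have term_bound: "revlex_lower_bound n l (coeff Q i * T ^ i) (e i)"
    and term_coeff: "mps_nth (coeff Q i * T ^ i) (e i) = c i * t ^ i" if "i \<in> IS" for i
    using revlex_lower_bound_mult[OF m[OF that, THEN conjunct1] revlex_lower_bound_power(1)[OF T, of i]]
      revlex_lower_bound_power(2)[OF T, of i]
    unfolding e_def c_def t_def by simp_all
  have "e ` IS \<noteq> {}" "e ` IS \<subseteq> exps_except n l"
    using Q(1) term_bound unfolding IS_def revlex_lower_bound_def by auto
  then obtain mu where mu: "mu \<in> e ` IS" "\<forall>i\<in>IS. revlex_le n mu (e i)"
    by (rule revlex_least_exists) auto
  define J0 where "J0 = {i\<in>IS. e i = mu}"
  have fin: "finite IS" "finite J0" unfolding IS_def J0_def by simp_all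
  have "poly Q T = (\<Sum>i\<in>IS. coeff Q i * T ^ i)"
    unfolding poly_altdef IS_def by (rule sum.mono_neutral_right) auto
  then have "0 = mps_nth (\<Sum>i\<in>IS. coeff Q i * T ^ i) mu" using root by (simp add: mps_nth_zero)
  also have "\<dots> = (\<Sum>i\<in>J0. mps_nth (coeff Q i * T ^ i) mu)"
    unfolding J0_def using term_bound by (intro mps_nth_sum_at_lower_bound[OF fin(1) _ mu(2)]) blast
  also have "\<dots> = (\<Sum>i\<in>J0. c i * t ^ i)"
    using term_coeff by (intro sum.cong) (auto simp: J0_def)
  finally have root_t: "(\<Sum>i\<in>J0. c i * t ^ i) = 0" ..
  have "\<forall>i\<in>J0. c i \<in> R" "\<exists>i\<in>J0. c i \<noteq> 0"
    using mu(1) m Q(3) unfolding J0_def c_def by auto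
  from algebraic_over_sumI[OF R fin(2) this root_t] show ?thesis unfolding t_def .
qed

definition mps_over :: "nat \<Rightarrow> nat \<Rightarrow> 'a::comm_ring_1 set \<Rightarrow> 'a mps set" where
  "mps_over n l R = {f. mps_supp_except n l f \<and> (\<forall>N. mps_nth f N \<in> R)}"

lemma subring_mps_over:
  assumes R: "is_subring R"
  shows "is_subring (mps_over n l R)"
  unfolding is_subring_def
proof (intro conjI ballI)
  show "0 \<in> mps_over n l R" "1 \<in> mps_over n l R"
    using revlex_lower_bound_one[of n l] R
    by (auto simp: mps_over_def mps_supp_except_def revlex_lower_bound_def mps_nth_zero mps_nth_one
        subring_zero subring_one)
  fix x y assume x: "x \<in> mps_over n l R" and y: "y \<in> mps_over n l R"
  show "x + y \<in> mps_over n l R" "- x \<in> mps_over n l R"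
    using x y R by (auto simp: mps_over_def mps_supp_except_def mps_nth_add mps_nth_uminus subring_add subring_uminus)
  show "x * y \<in> mps_over n l R"
    using x y R mps_supp_except_mult
    by (auto simp: mps_over_def mps_nth_mult subring_zero intro!: subring_sum subring_mult)
qed

lift_definition mps_trunc :: "nat \<Rightarrow> (nat \<Rightarrow> nat) \<Rightarrow> 'a::comm_ring_1 mps \<Rightarrow> 'a mps"
  is "\<lambda>n M f N. if revlex_less n N M then f N else 0"
  by simp

lemma mps_nth_trunc: "mps_nth (mps_trunc n M f) N = (if revlex_less n N M then mps_nth f N else 0)"
  by transfer simp

lemma revlex_lower_bound_trunc_diff:
  assumes S: "mps_supp_except n l S" and M: "M \<in> exps_except n l"
  shows "revlex_lower_bound n l (S - mps_trunc n M S) M"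
  unfolding revlex_lower_bound_def
proof (intro conjI allI impI M)
  show "mps_supp_except n l (S - mps_trunc n M S)"
    using S by (simp add: mps_supp_except_def mps_nth_diff mps_nth_trunc)
  fix N assume "mps_nth (S - mps_trunc n M S) N \<noteq> 0"
  then have "\<not> revlex_less n N M" "mps_nth S N \<noteq> 0"
    by (auto simp: mps_nth_diff mps_nth_trunc split: if_splits)
  then show "revlex_le n M N"
    using S revlex_less_total[OF M, of N] unfolding mps_supp_except_def revlex_le_def by blast
qed

text \<open>Induction along the well-order: the part of \<open>S\<close> below \<open>M\<close> has coefficients in \<open>R\<close>,
  so after translating \<open>P\<close> by it, \<open>M\<close> becomes the lowest exponent of a root.\<close>
lemma root_closed_coeffs_of_root:
  fixes S :: "'a::comm_ring_1 mps" and P :: "'a mps poly"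
  assumes R: "is_subring R" "root_closed R"
    and P: "P \<noteq> 0" "\<forall>i. coeff P i \<in> mps_over n l R"
    and S: "mps_supp_except n l S" "poly P S = 0"
  shows "mps_nth S M \<in> R"
  using wf_revlex_less[of n]
proof (induction M rule: wf_induct_rule)
  case (less M)
  show ?case
  proof (cases "M \<in> exps_except n l")
    case False
    then show ?thesis using S(1) R(1) unfolding mps_supp_except_def by (simp add: subring_zero)
  next
    case M: True
    define Pi where "Pi = mps_trunc n M S"
    define Q where "Q = pcompose P [:Pi, 1:]"
    have Pi: "Pi \<in> mps_over n l R"
      using S(1) less R(1) by (auto simp: mps_over_def Pi_def mps_supp_except_def mps_nth_trunc subring_zero)
    have "poly Q (S - Pi) = 0" using S(2) by (simp add: Q_def poly_pcompose)
    moreover have "pcompose Q [:- Pi, 1:] = P"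
      by (simp add: Q_def pcompose_pCons flip: pcompose_assoc)
    then have "Q \<noteq> 0" using P(1) by auto
    moreover have "\<forall>i. coeff Q i \<in> mps_over n l R"
      using Pi subring_mps_over[OF R(1)] P(2) unfolding Q_def
      by (intro coeffs_pcompose_in) (auto simp: coeff_pCons subring_zero subring_one split: nat.split)
    ultimately have "algebraic_over R (mps_nth (S - Pi) M)"
      using revlex_lower_bound_trunc_diff[OF S(1) M] unfolding Pi_def mps_over_def
      by (intro lowest_coeff_algebraic[OF R(1)]) auto
    moreover have "mps_nth (S - Pi) M = mps_nth S M"
      by (simp add: Pi_def mps_nth_diff mps_nth_trunc revlex_less_irrefl)
    ultimately show ?thesis using R(2) unfolding root_closed_def by simp
  qed
qed

section \<open>Singling out one variable\<close>

lemma exps_below_upd_reindex: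
  assumes Ml: "M l = 0"
  shows "(\<Sum>J\<in>exps_below (M(l := j)). F J) = (\<Sum>(J, a)\<in>exps_below M \<times> {0..j}. F (J(l := a)))"
proof (rule sum.reindex_bij_witness[where i="\<lambda>(J, a). J(l := a)" and j="\<lambda>J. (J(l := 0), J l)"])
  fix J assume "J \<in> exps_below (M(l := j))"
  then have le: "\<And>i. J i \<le> (M(l := j)) i" unfolding exps_below_def by blast
  have "J(l := 0) \<in> exps_below M" "J l \<in> {0..j}"
    unfolding exps_below_def using le[of l] le by (auto, metis fun_upd_apply le_zero_eq)
  then show "(J(l := 0), J l) \<in> exps_below M \<times> {0..j}" by blast
qed (use Ml in \<open>auto simp: exps_below_def fun_eq_iff\<close>, metis Ml le_zero_eq)

definition slice :: "nat \<Rightarrow> ((nat \<Rightarrow> nat) \<Rightarrow> 'a::comm_ring_1) \<Rightarrow> (nat \<Rightarrow> nat) \<Rightarrow> 'a fls" where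
  "slice l f M = fps_to_fls (Abs_fps (\<lambda>j. f (M(l := j))))"

lemma fps_to_fls_sum: "fps_to_fls (sum F A) = (\<Sum>a\<in>A. fps_to_fls (F a))"
  by (induction A rule: infinite_finite_induct) auto

lemma slice_sum: "slice l (\<lambda>I. \<Sum>k\<in>A. F k I) M = (\<Sum>k\<in>A. slice l (F k) M)"
proof -
  have "Abs_fps (\<lambda>j. \<Sum>k\<in>A. F k (M(l := j))) = (\<Sum>k\<in>A. Abs_fps (\<lambda>j. F k (M(l := j))))"
    by (rule fps_ext) (simp add: fps_sum_nth)
  then show ?thesis by (simp add: slice_def fps_to_fls_sum)
qed

lemma slice_mps_mult:
  assumes M: "finite_supp M" "M l = 0"
  shows "slice l (mps_mult f g) M = (\<Sum>J\<in>exps_below M. slice l f J * slice l g (\<lambda>i. M i - J i))"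
proof -
  have "Abs_fps (\<lambda>j. mps_mult f g (M(l := j))) =
    (\<Sum>J\<in>exps_below M. Abs_fps (\<lambda>j. f (J(l := j))) * Abs_fps (\<lambda>j. g ((\<lambda>i. M i - J i)(l := j))))"
  proof (rule fps_ext)
    fix j
    have upd: "(\<lambda>i. M i - J i)(l := j - a) = (\<lambda>i. (M(l := j)) i - (J(l := a)) i)" for J a
      using M(2) by (simp add: fun_eq_iff)
    have "Abs_fps (\<lambda>j. mps_mult f g (M(l := j))) $ j =
        (\<Sum>(J, a)\<in>exps_below M \<times> {0..j}. f (J(l := a)) * g (\<lambda>i. (M(l := j)) i - (J(l := a)) i))"
      by (simp only: fps_nth_Abs_fps mps_mult_exps_below exps_below_upd_reindex[of M l, OF M(2)])
    also have "\<dots> = (\<Sum>J\<in>exps_below M.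
        Abs_fps (\<lambda>j. f (J(l := j))) * Abs_fps (\<lambda>j. g ((\<lambda>i. M i - J i)(l := j)))) $ j"
      using finite_exps_below[OF M(1)] by (simp add: fps_sum_nth fps_mult_nth sum.cartesian_product upd)
    finally show "Abs_fps (\<lambda>j. mps_mult f g (M(l := j))) $ j =
      (\<Sum>J\<in>exps_below M. Abs_fps (\<lambda>j. f (J(l := j))) * Abs_fps (\<lambda>j. g ((\<lambda>i. M i - J i)(l := j)))) $ j" .
  qed
  then show ?thesis by (simp only: slice_def fps_to_fls_sum fls_times_fps_to_fls)
qed

text \<open>A series in \<open>x\<^sub>0, \<dots>, x\<^sub>n\<^sub>-\<^sub>1\<close> viewed as a series in the variables other than
  \<open>x\<^sub>l\<close> with coefficients in the Laurent series in \<open>x\<^sub>l\<close>.\<close>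
definition split_var :: "nat \<Rightarrow> nat \<Rightarrow> ((nat \<Rightarrow> nat) \<Rightarrow> 'a::comm_ring_1) \<Rightarrow> 'a fls mps" where
  "split_var n l f = Abs_mps (\<lambda>N. if N \<in> exps_except n l then slice l f N else 0)"

lemma mps_nth_split_var: "mps_nth (split_var n l f) N = (if N \<in> exps_except n l then slice l f N else 0)"
  unfolding split_var_def using exps_except_finite_supp by (subst Abs_mps_inverse) auto

lemma mps_supp_except_split_var: "mps_supp_except n l (split_var n l f)"
  unfolding mps_supp_except_def mps_nth_split_var by simp

lemma split_var_eqI:
  assumes "\<And>N. N \<in> exps_except n l \<Longrightarrow> slice l f N = mps_nth g N" "mps_supp_except n l g"
  shows "split_var n l f = g"
  using assms by (intro mps_eqI) (auto simp: mps_nth_split_var mps_supp_except_def)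

lemma split_var_mps_mult: "split_var n l (mps_mult f g) = split_var n l f * split_var n l g"
proof (rule split_var_eqI)
  fix N assume N: "N \<in> exps_except n l"
  have "J \<in> exps_except n l" "(\<lambda>i. N i - J i) \<in> exps_except n l" if "J \<in> exps_below N" for J
    using N that exps_except_le exps_except_diff by (auto simp: exps_below_def)
  then have "mps_nth (split_var n l f * split_var n l g) N =
      (\<Sum>J\<in>exps_below N. slice l f J * slice l g (\<lambda>i. N i - J i))"
    using exps_except_finite_supp[OF N] by (simp add: mps_nth_mult mps_nth_split_var)
  also have "\<dots> = slice l (mps_mult f g) N"
    using N exps_except_finite_supp[OF N] by (intro slice_mps_mult[symmetric]) (auto simp: exps_except_def)
  finally show "slice l (mps_mult f g) N = mps_nth (split_var n l f * split_var n l g) N" ..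
qed (intro mps_supp_except_mult mps_supp_except_split_var)

lemma split_var_one: "split_var n l (\<lambda>I. if I = (\<lambda>_. 0) then 1 else 0) = 1"
proof (rule split_var_eqI)
  fix N assume N: "N \<in> exps_except n l"
  have unit: "Abs_fps (\<lambda>j. if N(l := j) = (\<lambda>_. 0) then 1 else 0) = (if N = (\<lambda>_. 0) then 1 else 0)"
  proof (rule fps_ext)
    fix j
    have "N l = 0" using N by (simp add: exps_except_def)
    then have "N(l := j) = (\<lambda>_. 0) \<longleftrightarrow> N = (\<lambda>_. 0) \<and> j = 0"
      by (auto simp: fun_eq_iff)
    then show "Abs_fps (\<lambda>j. if N(l := j) = (\<lambda>_. 0) then 1 else 0) $ j = (if N = (\<lambda>_. 0) then 1 else 0) $ j"
      by simp
  qed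
  show "slice l (\<lambda>I. if I = (\<lambda>_. 0) then 1 else 0) N = mps_nth 1 N"
    unfolding slice_def mps_nth_one unit by simp
qed (use revlex_lower_bound_one in \<open>auto simp: revlex_lower_bound_def\<close>)

lemma split_var_mps_pow: "split_var n l (mps_pow f k) = split_var n l f ^ k"
  by (induction k) (simp_all add: split_var_one split_var_mps_mult)

lemma split_var_sum: "split_var n l (\<lambda>I. \<Sum>k\<in>A. F k I) = (\<Sum>k\<in>A. split_var n l (F k))"
  by (rule mps_eqI) (simp add: mps_nth_split_var mps_nth_sum slice_sum)

section \<open>Series and Laurent series over a subfield\<close>

definition fps_over :: "'a::comm_ring_1 set \<Rightarrow> 'a fls set" where
  "fps_over E = {fps_to_fls f | f. \<forall>m. f $ m \<in> E}"

text \<open>The field \<open>E((x))\<close>, realised as the fractions of \<open>E[[x]]\<close> inside \<open>F((x))\<close>.\<close>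
definition frac_fps_over :: "'a::field set \<Rightarrow> 'a fls set" where
  "frac_fps_over E = {a / b | a b. a \<in> fps_over E \<and> b \<in> fps_over E \<and> b \<noteq> 0}"

lemma subring_fps_over:
  assumes E: "is_subring E"
  shows "is_subring (fps_over E)"
  unfolding is_subring_def
proof (intro conjI ballI)
  show "0 \<in> fps_over E" "1 \<in> fps_over E"
    unfolding fps_over_def using subring_zero[OF E] subring_one[OF E]
    by (auto intro!: exI[of _ 0] exI[of _ 1])
  fix x y assume "x \<in> fps_over E" "y \<in> fps_over E"
  then obtain f g where f: "x = fps_to_fls f" "\<forall>m. f $ m \<in> E" and g: "y = fps_to_fls g" "\<forall>m. g $ m \<in> E"
    unfolding fps_over_def by blast
  show "x + y \<in> fps_over E"
    unfolding fps_over_def using f g subring_add[OF E] by (auto intro!: exI[of _ "f + g"])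
  show "- x \<in> fps_over E"
    unfolding fps_over_def using f subring_uminus[OF E] by (auto intro!: exI[of _ "- f"])
  show "x * y \<in> fps_over E"
    unfolding fps_over_def using f g
    by (intro CollectI exI[of _ "f * g"])
      (simp add: fls_times_fps_to_fls fps_mult_nth subring_sum[OF E] subring_mult[OF E])
qed

lemma fps_over_subset_frac_fps_over: "is_subring E \<Longrightarrow> fps_over E \<subseteq> frac_fps_over E"
  unfolding frac_fps_over_def using subring_one[OF subring_fps_over] by force

lemma subfield_frac_fps_over:
  assumes E: "is_subring E"
  shows "is_subfield (frac_fps_over E)"
proof -
  have L: "is_subring (fps_over E)" using subring_fps_over[OF E] .
  have frac: "a / b \<in> frac_fps_over E" if "a \<in> fps_over E" "b \<in> fps_over E" "b \<noteq> 0" for a b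
    unfolding frac_fps_over_def using that by blast
  show ?thesis
    unfolding is_subfield_def
  proof (intro conjI ballI)
    show "0 \<in> frac_fps_over E" "1 \<in> frac_fps_over E"
      using fps_over_subset_frac_fps_over[OF E] subring_zero[OF L] subring_one[OF L] by auto
    fix x y assume "x \<in> frac_fps_over E" "y \<in> frac_fps_over E"
    then obtain a b c d where ab: "x = a / b" "a \<in> fps_over E" "b \<in> fps_over E" "b \<noteq> 0"
      and cd: "y = c / d" "c \<in> fps_over E" "d \<in> fps_over E" "d \<noteq> 0"
      unfolding frac_fps_over_def by blast
    have "x + y = (a * d + c * b) / (b * d)" using ab cd by (simp add: field_simps)
    also have "\<dots> \<in> frac_fps_over E"
      using ab cd L by (intro frac) (auto intro: subring_add subring_mult)
    finally show "x + y \<in> frac_fps_over E" .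
    have "x * y = (a * c) / (b * d)" using ab cd by simp
    also have "\<dots> \<in> frac_fps_over E" using ab cd L by (intro frac) (auto intro: subring_mult)
    finally show "x * y \<in> frac_fps_over E" .
    have "- x = (- a) / b" using ab by simp
    also have "\<dots> \<in> frac_fps_over E" using ab L by (intro frac) (auto intro: subring_uminus)
    finally show "- x \<in> frac_fps_over E" .
    show "inverse x \<in> frac_fps_over E"
    proof (cases "a = 0")
      case True
      then show ?thesis using ab \<open>0 \<in> frac_fps_over E\<close> by simp
    next
      case False
      then show ?thesis using ab frac[of b a] by (simp add: inverse_eq_divide)
    qed
  qed
qed

text \<open>Clearing denominators turns a polynomial over \<open>E((x))\<close> into one over \<open>E[[x]]\<close>.\<close>
lemma fps_algebraic_over_if_algebraic_over:
  assumes E: "is_subring E" and "algebraic_over (frac_fps_over E) (fps_to_fls a)"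
  shows "fps_algebraic_over E a"
proof -
  have L: "is_subring (fps_over E)" using subring_fps_over[OF E] .
  obtain p where p: "p \<noteq> 0" "\<forall>i. coeff p i \<in> frac_fps_over E" "poly p (fps_to_fls a) = 0"
    using assms(2) unfolding algebraic_over_def by blast
  then have "\<forall>i. \<exists>a b. a \<in> fps_over E \<and> b \<in> fps_over E \<and> b \<noteq> 0 \<and> coeff p i = a / b"
    unfolding frac_fps_over_def by blast
  then obtain num den where nd: "\<And>i. num i \<in> fps_over E \<and> den i \<in> fps_over E \<and> den i \<noteq> 0 \<and> coeff p i = num i / den i"
    by metis
  define B where "B = (\<Prod>i\<le>degree p. den i)"
  define q where "q = smult B p"
  have "B \<noteq> 0" unfolding B_def using nd by simp
  have q_coeff: "coeff q i \<in> fps_over E" for i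
  proof (cases "i \<le> degree p")
    case True
    then have "B = den i * (\<Prod>j\<in>{..degree p} - {i}. den j)"
      unfolding B_def by (subst prod.remove[of _ i]) auto
    then have "coeff q i = num i * (\<Prod>j\<in>{..degree p} - {i}. den j)"
      unfolding q_def using nd[of i] by simp
    then show ?thesis using nd L by (simp add: subring_mult subring_prod)
  next
    case False
    then show ?thesis unfolding q_def using subring_zero[OF L] by (simp add: coeff_eq_0)
  qed
  have "\<forall>k m. fls_nth (coeff q k) m \<in> E"
  proof (intro allI)
    fix k m
    obtain f where "coeff q k = fps_to_fls f" "\<forall>m. f $ m \<in> E"
      using q_coeff[of k] unfolding fps_over_def by blast
    then show "fls_nth (coeff q k) m \<in> E" using subring_zero[OF E] by simp
  qed
  moreover have "q \<noteq> 0" "poly q (fps_to_fls a) = 0"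
    using \<open>B \<noteq> 0\<close> p(1,3) by (simp_all add: q_def)
  ultimately show ?thesis unfolding fps_algebraic_over_def by blast
qed

lemma mps_over_mono: "R \<subseteq> R' \<Longrightarrow> mps_over n l R \<subseteq> mps_over n l R'"
  unfolding mps_over_def by blast

lemma exps_upd_zero_in_exps_except: "I \<in> exps n \<Longrightarrow> I(l := 0) \<in> exps_except n l"
  unfolding exps_def exps_except_def by auto

lemma exps_except_upd_in_exps: "N \<in> exps_except n l \<Longrightarrow> l < n \<Longrightarrow> N(l := j) \<in> exps n"
  unfolding exps_def exps_except_def by auto

lemma mps_nth_split_var_upd:
  "I \<in> exps n \<Longrightarrow> mps_nth (split_var n l \<sigma>) (I(l := 0)) = fps_to_fls (Abs_fps (\<lambda>j. \<sigma> (I(l := j))))"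
  using exps_upd_zero_in_exps_except[of I n l] by (simp add: mps_nth_split_var slice_def)

lemma split_var_annihilated:
  fixes \<sigma> :: "(nat \<Rightarrow> nat) \<Rightarrow> 'a::field"
  assumes E: "is_subring E" and \<sigma>: "mps_algebraic_over E n \<sigma>" and l: "l < n"
  obtains P where "P \<noteq> 0" "\<forall>i. coeff P i \<in> mps_over n l (fps_over E)" "poly P (split_var n l \<sigma>) = 0"
proof -
  obtain c d where c_in: "\<forall>k\<le>d. \<forall>I\<in>exps n. c k I \<in> E"
    and c_nz: "\<exists>k\<le>d. \<exists>I\<in>exps n. c k I \<noteq> 0"
    and rel: "\<forall>I\<in>exps n. (\<Sum>k\<le>d. mps_mult (c k) (mps_pow \<sigma> k) I) = 0"
    using \<sigma> unfolding mps_algebraic_over_def by blast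
  define P where "P = (\<Sum>k\<le>d. monom (split_var n l (c k)) k)"
  have coeff_P: "coeff P i = (if i \<le> d then split_var n l (c i) else 0)" for i
    unfolding P_def by (simp add: coeff_sum)
  have "poly P (split_var n l \<sigma>) = split_var n l (\<lambda>I. \<Sum>k\<le>d. mps_mult (c k) (mps_pow \<sigma> k) I)"
    by (simp add: P_def poly_sum poly_monom split_var_sum split_var_mps_mult split_var_mps_pow)
  also have "\<dots> = 0"
    using rel exps_except_upd_in_exps[OF _ l]
    by (intro split_var_eqI) (simp_all add: slice_def mps_nth_zero mps_supp_except_def fps_ext)
  finally have "poly P (split_var n l \<sigma>) = 0" .
  moreover obtain k I where "k \<le> d" "I \<in> exps n" "c k I \<noteq> 0" using c_nz by blast
  then have "fls_nth (mps_nth (coeff P k) (I(l := 0))) (int (I l)) \<noteq> 0"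
    using exps_upd_zero_in_exps_except[of I n l] by (simp add: coeff_P mps_nth_split_var slice_def)
  then have "P \<noteq> 0" by (auto simp: mps_nth_zero)
  moreover have "coeff P i \<in> mps_over n l (fps_over E)" for i
    using c_in exps_except_upd_in_exps[OF _ l] subring_zero[OF subring_fps_over[OF E]] subring_zero[OF E]
      mps_supp_except_split_var
    by (auto simp: coeff_P mps_over_def mps_nth_split_var slice_def fps_over_def mps_supp_except_def mps_nth_zero)
  ultimately show ?thesis using that by blast
qed

lemma split_var_coeff_in_root_closed:
  fixes \<sigma> :: "(nat \<Rightarrow> nat) \<Rightarrow> 'a::field"
  assumes E: "is_subring E" and \<sigma>: "mps_algebraic_over E n \<sigma>" and l: "l < n"
    and R: "is_subring R" "root_closed R" "fps_over E \<subseteq> R"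
  shows "mps_nth (split_var n l \<sigma>) N \<in> R"
proof -
  obtain P where P: "P \<noteq> 0" "\<forall>i. coeff P i \<in> mps_over n l (fps_over E)"
    "poly P (split_var n l \<sigma>) = 0"
    using E \<sigma> l by (rule split_var_annihilated)
  then have "\<forall>i. coeff P i \<in> mps_over n l R" using mps_over_mono[OF R(3)] by blast
  then show ?thesis
    using root_closed_coeffs_of_root[OF R(1,2) P(1) _ mps_supp_except_split_var P(3)] by blast
qed

theorem lemma3p1:
  fixes E :: "'a::field set" and n :: nat and \<sigma> :: "(nat \<Rightarrow> nat) \<Rightarrow> 'a"
  assumes "is_subfield E"
    and "mps_algebraic_over E n \<sigma>"
  shows "\<forall>l<n. \<forall>I\<in>exps n. fps_algebraic_over E (Abs_fps (\<lambda>j. \<sigma> (I(l := j))))"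
proof (intro allI impI ballI)
  fix l I assume l: "l < n" and I: "I \<in> exps n"
  have E: "is_subring E" using assms(1) by (rule subfield_imp_subring)
  let ?K = "frac_fps_over E"
  have K: "is_subfield ?K" "is_subring ?K"
    using subfield_frac_fps_over[OF E] subfield_imp_subring by blast+
  have "fps_over E \<subseteq> {z. integral_over ?K z}"
    using fps_over_subset_frac_fps_over[OF E] integral_over_const[OF K(2)] by blast
  then have "mps_nth (split_var n l \<sigma>) (I(l := 0)) \<in> {z. integral_over ?K z}"
    by (intro split_var_coeff_in_root_closed[OF E assms(2) l subring_integral_over[OF K(2)]
        root_closed_integral_over[OF K(1)]])
  then have "integral_over ?K (fps_to_fls (Abs_fps (\<lambda>j. \<sigma> (I(l := j)))))"
    by (simp only: mps_nth_split_var_upd[OF I] mem_Collect_eq)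
  then have "algebraic_over ?K (fps_to_fls (Abs_fps (\<lambda>j. \<sigma> (I(l := j)))))"
    by (rule integral_over_imp_algebraic_over[OF K(2)])
  then show "fps_algebraic_over E (Abs_fps (\<lambda>j. \<sigma> (I(l := j))))"
    by (rule fps_algebraic_over_if_algebraic_over[OF E])
qed

end
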